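(* For any finite subset $E\subseteq\mathbb{N}$ with $|E|\ge2$, $$\mathcal{F}_E=\Big\{B\subseteq\mathbb{N}:\exists L\subseteq\Pi\setminus A_E\text{ finite with }\bigcap_{p\in L}p\mathbb{N}\cap\bigcap_{p\in A_E\setminus\Pi_E}\big(\{0,\alpha_E(p)\}+p\mathbb{Z}\big)\subseteq B\Big\},$$ where $\bigcap_{p\in\emptyset}p\mathbb{N}=\mathbb{N}$.
   Context: $\mathbb{N}=\{1,2,\dots\}$, $\mathbb{N}_0=\{0\}\cup\mathbb{N}$, $\Pi$ the set of primes, $\Pi_z$ the set of prime divisors of $z$; $p\mathbb{N}=\{pn:n\in\mathbb{N}\}$, $\{0,k\}+p\mathbb{Z}=p\mathbb{Z}\cup(k+p\mathbb{Z})$. The Kirch topology $\tau_K$ on $\mathbb{N}$ is generated by the base of all $a+b\mathbb{N}_0=\{a+bn:n\in\mathbb{N}_0\}$ with $a,b\in\mathbb{N}$ coprime and $b$ square-free. Closures $\overline{U}$ are in $\tau_K$; $\tau_x=\{U\in\tau_K:x\in U\}$. For finite $E\subseteq\mathbb{N}$, $\mathcal{F}_E=\{B\subseteq\mathbb{N}:\exists (U_x)_{x\in E}\in\prod_{x\in E}\tau_x\ (\bigcap_{x\in E}\overline{U_x}\subseteq B)\}$. For nonempty finite $E$: $\Pi_E=\bigcap_{z\in E}\Pi_z$; $A_E=\{p\in\Pi:\exists k\in\mathbb{N}\ (E\subseteq\{0,k\}+p\mathbb{Z})\}$; $\alpha_E:A_E\to\mathbb{N}_0$ is the unique function with $0\le\alpha_E(p)<p$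 and $E\subseteq\{0,\alpha_E(p)\}+p\mathbb{Z}$ for all $p\in A_E$, $\alpha_E(2)=1$, and $\alpha_E(p)=0$ for $p\in\Pi_E\setminus\{2\}$. *)

theory Defs
  imports "HOL-Analysis.Analysis" "HOL-Computational_Algebra.Computational_Algebra"
begin

text \<open>Natural numbers N = {1,2,...} are modelled as positive elements of type nat.\<close>

definition posnat :: "nat set" where
  "posnat = {n. 1 \<le> n}"

definition arith_prog :: "nat \<Rightarrow> nat \<Rightarrow> nat set" where
  "arith_prog a b = {a + b * n | n. True}"

definition kirch :: "nat topology" where
  "kirch = topology_generated_by
     {arith_prog a b | a b. 1 \<le> a \<and> 1 \<le> b \<and> coprime a b \<and> squarefree b}"

definition tau :: "nat \<Rightarrow> nat set set" where
  "tau x = {U. openin kirch U \<and> x \<in> U}"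

definition F_filter :: "nat set \<Rightarrow> nat set set" where
  "F_filter E = {B. B \<subseteq> posnat \<and>
     (\<exists>U. (\<forall>x\<in>E. U x \<in> tau x) \<and> (\<Inter>x\<in>E. kirch closure_of (U x)) \<subseteq> B)}"

definition prime_divs :: "nat \<Rightarrow> nat set" where
  "prime_divs z = {p. prime p \<and> p dvd z}"

definition Pi_E :: "nat set \<Rightarrow> nat set" where
  "Pi_E E = (\<Inter>z\<in>E. prime_divs z)"

definition A_E :: "nat set \<Rightarrow> nat set" where
  "A_E E = {p. prime p \<and> (\<exists>k. 1 \<le> k \<and> (\<forall>z\<in>E. z mod p = 0 \<or> z mod p = k mod p))}"

definition alpha_E :: "nat set \<Rightarrow> nat \<Rightarrow> nat" where
  "alpha_E E p = (THE a. a < p \<and> (\<forall>z\<in>E. z mod p = 0 \<or> z mod p = a)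
      \<and> (p = 2 \<longrightarrow> a = 1) \<and> (p \<in> Pi_E E - {2} \<longrightarrow> a = 0))"

end

theory Submission
  imports Defs "HOL-Number_Theory.Cong"
begin

text \<open>
  Every Kirch neighbourhood of x contains a progression x + c N_0 with c squarefree and
  coprime to x, and n lies in the closure of x + b N_0 iff for each prime p dividing b
  either p divides n or n = x (mod p); for the converse one solves the two congruences
  modulo b and c, which are compatible modulo the squarefree number gcd b c.
  Hence the members of F_E are exactly the supersets of sets cut out by finitely many
  conditions, one for each prime p, coupling n to the non-zero residues of E modulo p.
  For p outside A_E this condition forces p to divide n, for p in A_E - Pi_E it says
  n = 0 or n = alpha_E p (mod p), and for p in Pi_E it is void; since A_E is finite when
  E has at least two elements, all primes of A_E - Pi_E may be imposed at once.
\<close>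

lemma squarefree_dvdI:
  fixes g d :: "'a :: factorial_semiring"
  assumes "squarefree g" and "\<And>p. prime p \<Longrightarrow> p dvd g \<Longrightarrow> p dvd d"
  shows "g dvd d"
proof (cases "d = 0")
  case False
  have "g \<noteq> 0"
    using assms(1) by auto
  then show ?thesis
  proof (rule multiplicity_le_imp_dvd)
    fix p :: 'a
    assume p: "prime p"
    show "multiplicity p g \<le> multiplicity p d"
    proof (cases "p dvd g")
      case True
      with assms p False have "1 \<le> multiplicity p d"
        by (simp add: Suc_le_eq prime_multiplicity_gt_zero_iff)
      moreover have "multiplicity p g \<le> 1"
        using assms(1) \<open>g \<noteq> 0\<close> p squarefree_factorial_semiring'' by blast
      ultimately show ?thesis
        by linarith
    qed (simp add: not_dvd_imp_multiplicity_0)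
  qed
qed simp

lemma cong_squarefree_modulusI:
  fixes m a b :: nat
  assumes "squarefree m" and "\<And>p. prime p \<Longrightarrow> p dvd m \<Longrightarrow> [a = b] (mod p)"
  shows "[a = b] (mod m)"
proof -
  have "[a = b] (mod m)" if "b \<le> a" "\<And>p. prime p \<Longrightarrow> p dvd m \<Longrightarrow> [a = b] (mod p)" for a b
    using that assms(1) by (simp add: cong_altdef_nat squarefree_dvdI)
  then show ?thesis
    using assms(2) by (metis cong_sym nat_le_linear)
qed

lemma squarefree_lcm:
  fixes a b :: "'a :: factorial_semiring_gcd"
  assumes "squarefree a" and "squarefree b"
  shows "squarefree (lcm a b)"
proof -
  have "a \<noteq> 0" "b \<noteq> 0"
    using assms by auto
  then have "lcm a b \<noteq> 0"
    by (simp add: lcm_eq_0_iff)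
  with assms \<open>a \<noteq> 0\<close> \<open>b \<noteq> 0\<close> show ?thesis
    by (simp add: squarefree_factorial_semiring'' multiplicity_lcm)
qed

lemma mem_arith_prog_iff: "y \<in> arith_prog a b \<longleftrightarrow> a \<le> y \<and> [y = a] (mod b)"
  by (auto simp: arith_prog_def cong_le_nat mult.commute)

lemma arith_prog_subset:
  assumes "c dvd b" and "x \<in> arith_prog a c"
  shows "arith_prog x b \<subseteq> arith_prog a c"
  using assms by (auto simp: mem_arith_prog_iff) (meson cong_dvd_modulus_nat cong_trans)

lemma self_in_arith_prog: "a \<in> arith_prog a b"
  by (simp add: mem_arith_prog_iff)

lemma arith_progs_intersect:
  fixes x n b c :: nat
  assumes "1 \<le> b" and "1 \<le> c" and "[x = n] (mod gcd b c)"
  shows "\<exists>y. y \<in> arith_prog x b \<and> y \<in> arith_prog n c"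
proof -
  \<comment> \<open>The summand \<open>b * n\<close> keeps the truncated subtraction below exact.\<close>
  have "n \<le> x + b * n"
    using assms(1) by (simp add: trans_le_add2)
  moreover have "[x + b * n = n + 0] (mod gcd b c)"
    using assms(3) by (intro cong_add) (simp_all add: cong_0_iff)
  ultimately have "gcd c b dvd x + b * n - n"
    by (simp add: cong_altdef_nat gcd.commute)
  then obtain k where k: "[c * k = x + b * n - n] (mod b)"
    using cong_solve_dvd_nat by blast
  define y where "y = n + c * (k + b * x)"
  have "[c * (k + b * x) = c * k] (mod b)"
    by (simp add: cong_def distrib_left mult.left_commute)
  then have "[y = n + (x + b * n - n)] (mod b)"
    unfolding y_def using k by (intro cong_add) (auto intro: cong_trans)
  then have "[y = x] (mod b)"
    using \<open>n \<le> x + b * n\<close> by (simp add: cong_def)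
  moreover have "x \<le> y"
  proof -
    have "x \<le> b * x"
      using mult_le_mono1[OF assms(1)] by simp
    also have "\<dots> \<le> c * (k + b * x)"
      using mult_le_mono[OF assms(2) le_add2] by simp
    finally show ?thesis
      by (simp add: y_def trans_le_add2)
  qed
  ultimately show ?thesis
    by (auto simp: mem_arith_prog_iff y_def cong_add_lcancel_0_nat cong_mult_self_left)
qed

lemma topspace_kirch: "topspace kirch = posnat"
proof -
  have "\<Union>{arith_prog a b | a b. 1 \<le> a \<and> 1 \<le> b \<and> coprime a b \<and> squarefree b} = posnat"
  proof (intro equalityI subsetI)
    fix n
    assume "n \<in> posnat"
    then have "n \<in> arith_prog n 1" "1 \<le> n"
      by (simp_all add: self_in_arith_prog posnat_def)
    then show "n \<in> \<Union>{arith_prog a b | a b. 1 \<le> a \<and> 1 \<le> b \<and> coprime a b \<and> squarefree b}"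
      by fastforce
  qed (auto simp: posnat_def mem_arith_prog_iff)
  then show ?thesis
    by (simp add: kirch_def)
qed

lemma openin_kirch_arith_prog:
  assumes "1 \<le> a" and "1 \<le> b" and "coprime a b" and "squarefree b"
  shows "openin kirch (arith_prog a b)"
  unfolding kirch_def openin_topology_generated_by_iff
  using assms by (intro generate_topology_on.Basis) blast

lemma openin_kirch_arith_progE:
  assumes "openin kirch V" and "n \<in> V"
  obtains c where "1 \<le> c" "squarefree c" "coprime n c" "arith_prog n c \<subseteq> V"
proof -
  have "generate_topology_on
          {arith_prog a b | a b. 1 \<le> a \<and> 1 \<le> b \<and> coprime a b \<and> squarefree b} V"
    using assms(1) by (simp add: kirch_def openin_topology_generated_by_iff)
  then have "\<exists>c. 1 \<le> c \<and> squarefree c \<and> coprime n c \<and> arith_prog n c \<subseteq> V"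
    using assms(2)
  proof (induction arbitrary: n)
    case (Int V W)
    then obtain c d where
      c: "1 \<le> c" "squarefree c" "coprime n c" "arith_prog n c \<subseteq> V" and
      d: "1 \<le> d" "squarefree d" "coprime n d" "arith_prog n d \<subseteq> W"
      by blast
    have "arith_prog n (lcm c d) \<subseteq> V \<inter> W"
      using c(4) d(4) arith_prog_subset[OF _ self_in_arith_prog] by fastforce
    moreover have "1 \<le> lcm c d" "squarefree (lcm c d)" "coprime n (lcm c d)"
      using c d by (simp_all add: Suc_le_eq lcm_pos_nat squarefree_lcm)
      (meson coprime_divisors coprime_mult_right_iff dvd_refl lcm_least dvd_triv_left dvd_triv_right)
    ultimately show ?case
      by blast
  next
    case (UN K)
    then show ?case
      by blast
  next
    case (Basis S)
    then obtain a b where S: "S = arith_prog a b" "1 \<le> b" "coprime a b" "squarefree b"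
      by blast
    with Basis.prems have "coprime n b"
      by (metis mem_arith_prog_iff cong_imp_coprime cong_sym)
    with S Basis.prems show ?case
      by (metis arith_prog_subset dvd_refl)
  qed simp
  then show ?thesis
    using that by blast
qed

lemma in_kirch_closure_of_arith_prog_iff:
  assumes "1 \<le> b"
  shows "n \<in> kirch closure_of arith_prog x b \<longleftrightarrow>
    n \<in> posnat \<and> (\<forall>p. prime p \<longrightarrow> p dvd b \<longrightarrow> p dvd n \<or> [n = x] (mod p))"
proof
  assume n: "n \<in> kirch closure_of arith_prog x b"
  then have "n \<in> posnat"
    using closure_of_subset_topspace topspace_kirch by fastforce
  moreover have "p dvd n \<or> [n = x] (mod p)" if p: "prime p" "p dvd b" for p
  proof (rule ccontr)
    assume "\<not> (p dvd n \<or> [n = x] (mod p))"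
    then have "\<not> p dvd n" and not_cong: "\<not> [n = x] (mod p)"
      by auto
    then have "coprime n p"
      using p(1) prime_imp_coprime coprime_commute by blast
    then have "openin kirch (arith_prog n p)"
      using \<open>n \<in> posnat\<close> p(1)
      by (intro openin_kirch_arith_prog) (simp_all add: posnat_def Suc_le_eq prime_gt_0_nat squarefree_prime)
    then obtain y where "y \<in> arith_prog x b" "y \<in> arith_prog n p"
      using n self_in_arith_prog unfolding in_closure_of by blast
    then have "[y = x] (mod p)" "[y = n] (mod p)"
      using cong_dvd_modulus_nat[OF _ p(2)] by (simp_all add: mem_arith_prog_iff)
    then show False
      using not_cong by (metis cong_sym cong_trans)
  qed
  ultimately show "n \<in> posnat \<and> (\<forall>p. prime p \<longrightarrow> p dvd b \<longrightarrow> p dvd n \<or> [n = x] (mod p))"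
    by blast
next
  assume n: "n \<in> posnat \<and> (\<forall>p. prime p \<longrightarrow> p dvd b \<longrightarrow> p dvd n \<or> [n = x] (mod p))"
  have "\<exists>y\<in>arith_prog x b. y \<in> T" if T: "openin kirch T" "n \<in> T" for T
  proof -
    obtain c where c: "1 \<le> c" "squarefree c" "coprime n c" "arith_prog n c \<subseteq> T"
      using openin_kirch_arith_progE[OF T] .
    have "[n = x] (mod gcd b c)"
    proof (rule cong_squarefree_modulusI)
      show "squarefree (gcd b c)"
        using c(2) squarefree_mono by blast
      fix p :: nat
      assume "prime p" "p dvd gcd b c"
      moreover from this have "p dvd c"
        using dvd_trans gcd_dvd2 by blast
      then have "\<not> p dvd n"
        using c(3) \<open>prime p\<close> coprime_common_divisor not_prime_unit by blast
      ultimately show "[n = x] (mod p)"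
        using n by auto
    qed
    then show ?thesis
      using arith_progs_intersect[OF assms c(1) cong_sym] c(4) by blast
  qed
  then show "n \<in> kirch closure_of arith_prog x b"
    using n by (auto simp: in_closure_of topspace_kirch)
qed

text \<open>The condition at the prime p for n to lie in the closures of neighbourhoods of all
  points of E.\<close>

definition compatible_residue :: "nat set \<Rightarrow> nat \<Rightarrow> nat \<Rightarrow> bool" where
  "compatible_residue E p n \<longleftrightarrow> (\<forall>x\<in>E. \<not> p dvd x \<longrightarrow> p dvd n \<or> [n = x] (mod p))"

lemma squarefree_prod_primes:
  fixes P :: "nat set"
  assumes "\<And>p. p \<in> P \<Longrightarrow> prime p"
  shows "squarefree (\<Prod>P)"
  using assms by (intro squarefree_prod_coprime) (auto simp: primes_coprime squarefree_prime)

lemma in_kirch_closure_of_arith_prog_if_compatible: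
  assumes "x \<in> E" and "1 \<le> c" and "coprime x c" and "n \<in> posnat"
    and "\<And>p. prime p \<Longrightarrow> p dvd c \<Longrightarrow> compatible_residue E p n"
  shows "n \<in> kirch closure_of arith_prog x c"
  unfolding in_kirch_closure_of_arith_prog_iff[OF assms(2)]
proof (intro conjI allI impI)
  fix p
  assume p: "prime p" "p dvd c"
  then have "\<not> p dvd x"
    using assms(3) coprime_common_divisor not_prime_unit by blast
  with p show "p dvd n \<or> [n = x] (mod p)"
    using assms(1,5) by (simp add: compatible_residue_def)
qed (rule assms(4))

lemma compatible_residue_if_in_kirch_closures:
  assumes "\<And>x. x \<in> E \<Longrightarrow> n \<in> kirch closure_of arith_prog x (c x)"
    and "\<And>x. x \<in> E \<Longrightarrow> 1 \<le> c x" and "\<And>x. x \<in> E \<Longrightarrow> \<not> p dvd x \<Longrightarrow> p dvd c x"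
    and "prime p"
  shows "compatible_residue E p n"
  unfolding compatible_residue_def
proof (intro ballI impI)
  fix x
  assume "x \<in> E" "\<not> p dvd x"
  then show "p dvd n \<or> [n = x] (mod p)"
    using assms in_kirch_closure_of_arith_prog_iff by blast
qed

lemma F_filter_imp_compatible_residues:
  assumes "finite E" and "B \<in> F_filter E"
  obtains P where "finite P" "P \<subseteq> {p. prime p}"
    "{n \<in> posnat. \<forall>p\<in>P. compatible_residue E p n} \<subseteq> B"
proof -
  obtain U where U: "\<And>x. x \<in> E \<Longrightarrow> openin kirch (U x) \<and> x \<in> U x"
    and UB: "(\<Inter>x\<in>E. kirch closure_of (U x)) \<subseteq> B"
    using assms(2) by (auto simp: F_filter_def tau_def)
  have "\<exists>c. 1 \<le> c \<and> squarefree c \<and> coprime x c \<and> arith_prog x c \<subseteq> U x" if "x \<in> E" for x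
  proof -
    from U[OF that] have "openin kirch (U x)" "x \<in> U x"
      by auto
    then show ?thesis
      by (rule openin_kirch_arith_progE) blast
  qed
  then obtain c where c: "\<And>x. x \<in> E \<Longrightarrow>
      1 \<le> c x \<and> squarefree (c x) \<and> coprime x (c x) \<and> arith_prog x (c x) \<subseteq> U x"
    by metis
  define P where "P = {p. prime p \<and> (\<exists>x\<in>E. p dvd c x)}"
  have "P \<subseteq> (\<Union>x\<in>E. {d. d dvd c x})"
    by (auto simp: P_def)
  moreover have "finite {d. d dvd c x}" if "x \<in> E" for x
    using c[OF that] by (intro finite_divisors_nat) simp
  ultimately have "finite P"
    using assms(1) finite_subset by blast
  moreover have "P \<subseteq> {p. prime p}"
    by (auto simp: P_def)
  moreover have "{n \<in> posnat. \<forall>p\<in>P. compatible_residue E p n} \<subseteq> B"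
  proof
    fix n
    assume "n \<in> {n \<in> posnat. \<forall>p\<in>P. compatible_residue E p n}"
    then have n: "n \<in> posnat" "\<forall>p\<in>P. compatible_residue E p n"
      by auto
    have "n \<in> kirch closure_of arith_prog x (c x)" if "x \<in> E" for x
      using c[OF that] n that
      by (intro in_kirch_closure_of_arith_prog_if_compatible) (auto simp: P_def)
    then have "n \<in> kirch closure_of (U x)" if "x \<in> E" for x
      using c[OF that] that closure_of_mono by blast
    then show "n \<in> B"
      using UB by blast
  qed
  ultimately show ?thesis
    using that by blast
qed

lemma compatible_residues_imp_F_filter:
  assumes "E \<subseteq> posnat" and "E \<noteq> {}" and "B \<subseteq> posnat" and "finite P"
    and "P \<subseteq> {p. prime p}" and "{n \<in> posnat. \<forall>p\<in>P. compatible_residue E p n} \<subseteq> B"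
  shows "B \<in> F_filter E"
proof -
  define c where "c x = \<Prod>{p\<in>P. \<not> p dvd x}" for x
  have c_pos: "1 \<le> c x" for x
    using assms(5) by (auto simp: c_def Suc_le_eq prime_gt_0_nat intro!: prod_pos)
  have "arith_prog x (c x) \<in> tau x" if "x \<in> E" for x
  proof -
    have "coprime x (c x)"
      using assms(5) by (auto simp: c_def coprime_commute prime_imp_coprime intro!: prod_coprime_right)
    moreover have "squarefree (c x)"
      using assms(5) unfolding c_def by (intro squarefree_prod_primes) auto
    ultimately show ?thesis
      using assms(1) that c_pos
      by (auto simp: tau_def posnat_def self_in_arith_prog intro!: openin_kirch_arith_prog)
  qed
  moreover have "(\<Inter>x\<in>E. kirch closure_of arith_prog x (c x)) \<subseteq> B"
  proof
    fix n
    assume n: "n \<in> (\<Inter>x\<in>E. kirch closure_of arith_prog x (c x))"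
    have "compatible_residue E p n" if "p \<in> P" for p
      using n c_pos assms(4,5) that
      by (intro compatible_residue_if_in_kirch_closures[of E n c]) (auto simp: c_def intro: dvd_prodI)
    moreover obtain x where "x \<in> E"
      using assms(2) by blast
    then have "n \<in> posnat"
      using n closure_of_subset_topspace topspace_kirch by fastforce
    ultimately have "n \<in> {n \<in> posnat. \<forall>p\<in>P. compatible_residue E p n}"
      by blast
    then show "n \<in> B"
      using assms(6) by blast
  qed
  ultimately have "(\<forall>x\<in>E. arith_prog x (c x) \<in> tau x) \<and>
      (\<Inter>x\<in>E. kirch closure_of arith_prog x (c x)) \<subseteq> B"
    by blast
  then have "\<exists>U. (\<forall>x\<in>E. U x \<in> tau x) \<and> (\<Inter>x\<in>E. kirch closure_of (U x)) \<subseteq> B"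
    by (intro exI[of _ "\<lambda>x. arith_prog x (c x)"])
  with assms(3) show ?thesis
    by (simp add: F_filter_def)
qed

lemma finite_A_E:
  assumes "finite E" and "E \<subseteq> posnat" and "2 \<le> card E"
  shows "finite (A_E E)"
proof -
  have "p \<le> Max E" if "p \<in> A_E E" for p
  proof (rule ccontr)
    assume "\<not> p \<le> Max E"
    obtain k where k: "\<forall>z\<in>E. z mod p = 0 \<or> z mod p = k mod p"
      using \<open>p \<in> A_E E\<close> by (auto simp: A_E_def)
    have "z = k mod p" if "z \<in> E" for z
    proof -
      have "z mod p = z"
        using \<open>\<not> p \<le> Max E\<close> Max_ge[OF assms(1) that] by simp
      moreover have "z \<noteq> 0"
        using assms(2) that by (auto simp: posnat_def)
      ultimately show ?thesis
        using k that by metis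
    qed
    then have "card E \<le> card {k mod p}"
      by (intro card_mono) auto
    then show False
      using assms(3) by simp
  qed
  then show ?thesis
    by (meson finite_atMost finite_subset atMost_iff subsetI)
qed

lemma alpha_E_eq_mod:
  assumes "p \<in> A_E E" and "x \<in> E" and "\<not> p dvd x"
  shows "alpha_E E p = x mod p"
  unfolding alpha_E_def
proof (rule the_equality)
  obtain k where k: "\<forall>z\<in>E. z mod p = 0 \<or> z mod p = k mod p" and "prime p"
    using assms(1) by (auto simp: A_E_def)
  moreover have "x mod p \<noteq> 0"
    using assms(3) by (simp add: mod_eq_0_iff_dvd)
  ultimately have "\<forall>z\<in>E. z mod p = 0 \<or> z mod p = x mod p"
    using assms(2) by metis
  moreover have "p \<notin> Pi_E E"
    using assms(2,3) by (auto simp: Pi_E_def prime_divs_def)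
  ultimately show "x mod p < p \<and> (\<forall>z\<in>E. z mod p = 0 \<or> z mod p = x mod p) \<and>
      (p = 2 \<longrightarrow> x mod p = 1) \<and> (p \<in> Pi_E E - {2} \<longrightarrow> x mod p = 0)"
    using \<open>prime p\<close> \<open>x mod p \<noteq> 0\<close> by (auto simp: prime_gt_0_nat)
next
  fix a
  assume "a < p \<and> (\<forall>z\<in>E. z mod p = 0 \<or> z mod p = a) \<and>
      (p = 2 \<longrightarrow> a = 1) \<and> (p \<in> Pi_E E - {2} \<longrightarrow> a = 0)"
  then show "a = x mod p"
    using assms(2,3) by (metis mod_eq_0_iff_dvd)
qed

lemma compatible_residue_Pi_E: "p \<in> Pi_E E \<Longrightarrow> compatible_residue E p n"
  by (auto simp: compatible_residue_def Pi_E_def prime_divs_def)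

lemma compatible_residue_iff_dvd:
  assumes "prime p" and "p \<notin> A_E E" and "1 \<le> n"
  shows "compatible_residue E p n \<longleftrightarrow> p dvd n"
proof
  assume compatible: "compatible_residue E p n"
  show "p dvd n"
  proof (rule ccontr)
    assume "\<not> p dvd n"
    with compatible have "\<forall>z\<in>E. z mod p = 0 \<or> z mod p = n mod p"
      by (auto simp: compatible_residue_def cong_def mod_eq_0_iff_dvd)
    then have "p \<in> A_E E"
      using assms(1,3) by (auto simp: A_E_def)
    with assms(2) show False
      by contradiction
  qed
qed (simp add: compatible_residue_def)

lemma compatible_residue_iff_alpha_E:
  assumes "p \<in> A_E E - Pi_E E"
  shows "compatible_residue E p n \<longleftrightarrow> n mod p = 0 \<or> n mod p = alpha_E E p"
proof -
  obtain x where "x \<in> E" "\<not> p dvd x"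
    using assms by (auto simp: Pi_E_def prime_divs_def A_E_def)
  moreover have "\<forall>z\<in>E. \<not> p dvd z \<longrightarrow> z mod p = alpha_E E p"
    using assms alpha_E_eq_mod by auto
  ultimately show ?thesis
    by (auto simp: compatible_residue_def cong_def mod_eq_0_iff_dvd)
qed

lemma prime_conditions_eq_compatible_residues:
  assumes "L \<subseteq> {p. prime p} - A_E E"
  shows "{n \<in> posnat. (\<forall>p\<in>L. p dvd n) \<and>
      (\<forall>p\<in>A_E E - Pi_E E. n mod p = 0 \<or> n mod p = alpha_E E p)} =
    {n \<in> posnat. \<forall>p\<in>L \<union> (A_E E - Pi_E E). compatible_residue E p n}"
proof -
  have "compatible_residue E p n \<longleftrightarrow> p dvd n" if "p \<in> L" "n \<in> posnat" for p n
    using assms that by (intro compatible_residue_iff_dvd) (auto simp: posnat_def)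
  then show ?thesis
    by (auto simp: compatible_residue_iff_alpha_E ball_Un)
qed

theorem lemma3p4:
  fixes E :: "nat set"
  assumes "finite E" and "E \<subseteq> posnat" and "card E \<ge> 2"
  shows "F_filter E =
    {B. B \<subseteq> posnat \<and>
      (\<exists>L. finite L \<and> L \<subseteq> {p. prime p} - A_E E \<and>
        {n \<in> posnat. (\<forall>p\<in>L. p dvd n) \<and>
           (\<forall>p\<in>A_E E - Pi_E E. n mod p = 0 \<or> n mod p = alpha_E E p)} \<subseteq> B)}"
    (is "_ = ?R")
proof -
  let ?T = "\<lambda>L. {n \<in> posnat. (\<forall>p\<in>L. p dvd n) \<and>
    (\<forall>p\<in>A_E E - Pi_E E. n mod p = 0 \<or> n mod p = alpha_E E p)}"
  let ?C = "\<lambda>P. {n \<in> posnat. \<forall>p\<in>P. compatible_residue E p n}"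
  show ?thesis
  proof (intro set_eqI iffI)
    fix B
    assume B: "B \<in> F_filter E"
    obtain P where P: "finite P" "P \<subseteq> {p. prime p}" "?C P \<subseteq> B"
      by (rule F_filter_imp_compatible_residues[OF assms(1) B])
    define L where "L = P - A_E E"
    have L: "finite L" "L \<subseteq> {p. prime p} - A_E E"
      using P by (auto simp: L_def)
    have "?T L = ?C (L \<union> (A_E E - Pi_E E))"
      by (rule prime_conditions_eq_compatible_residues[OF L(2)])
    also have "\<dots> \<subseteq> ?C P"
      using compatible_residue_Pi_E by (auto simp: L_def)
    also have "\<dots> \<subseteq> B"
      by (rule P(3))
    finally have "?T L \<subseteq> B" .
    moreover have "B \<subseteq> posnat"
      using B by (simp add: F_filter_def)
    ultimately show "B \<in> ?R"
      using L by blast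
  next
    fix B
    assume "B \<in> ?R"
    then obtain L where "B \<subseteq> posnat" "finite L" "L \<subseteq> {p. prime p} - A_E E" "?T L \<subseteq> B"
      by blast
    moreover from this have "?C (L \<union> (A_E E - Pi_E E)) \<subseteq> B"
      using prime_conditions_eq_compatible_residues by simp
    moreover have "finite (A_E E)" "A_E E \<subseteq> {p. prime p}" "E \<noteq> {}"
      using finite_A_E[OF assms] assms(3) by (auto simp: A_E_def)
    ultimately show "B \<in> F_filter E"
      by (intro compatible_residues_imp_F_filter[OF assms(2), of _ "L \<union> (A_E E - Pi_E E)"]) auto
  qed
qed

end
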